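(* A network $N$ of the session calculus is Padovani lock-free if and only if it satisfies $\mathcal{L}(\mathrm{ST})$.
   Context: Session calculus. Fix sets of locations $p,q,r,\dots$, labels $\lambda$ and recursion variables $X,Y$. Threads: $P ::= \mathbf{end} \mid \bigoplus_{i\in I} p_i!\lambda_i;P_i \mid \sum_{i\in I} p_i?\lambda_i;P_i \mid X \mid \mu X.P$, with $I$ finite (nonempty for $\bigoplus$) and expressions $\mu X.X$, $\mu X.\mu Y.P$ excluded. Networks: $N ::= p[\![P]\!] \mid 0 \mid N\parallel N$; in a network all locations are distinct, all threads are closed, and every location named in a send or receive is a location of $N$. Thread states additionally allow the form $\langle q!\lambda\rangle;P$ (an output already selected); network states are built from located thread states likewise, taken modulo the structural congruence $\equiv$ (associativity, commutativity of $\parallel$, $N\parallel 0\equiv N$). $\mathrm{proc}(p,N)$ is the unique thread state $P$ with $N\equiv p[\![P]\!]\parallel N'$. The transition relation is the least relation closed under $\equiv$ containing: (choice) $p[\![\bigoplus_{i\in I}p_i!\lambda_i;P_i]\!]\parallel N \xrightarrow{\tau} p[\![\langle p_k!\lambda_k\rangle;P_k]\!]\parallel N$ for $k\in I$; (unfold) $p[\![\mu X.P]\!]\parallel N\xrightarrow{\tau} p[\![P\{\mu X.P/X\}]\!]\parallel N$; (comm) $p_k[\![\langle q!\lambda_k\rangle;Q]\!]\parallel q[\![\sum_{i\in I}p_i?\lambda_i;P_i]\!]\parallel N \xrightarrow{(p_k,\lambda_k,q)} p_k[\![Q]\!]\parallel q[\![P_k]\!]\parallel N$ for $k\in I$. A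 transition involves the single location moving if it is a $\tau$-transition, and locations $p,q$ if labelled $(p,\lambda,q)$. A path is a network state with a maximal (infinite or ending in a state without outgoing transitions) sequence of transitions. A location $p$ successfully terminates on a path if $\mathrm{proc}(p,N_i)=\mathbf{end}$ for some state $N_i$ on it. Strong fairness of transitions (ST): a transition (source state, label, target state) is enabled in its source state; it is relentlessly enabled on a path if every suffix contains its source. A path $\pi$ is ST-fair if for each suffix $\pi'$, every transition relentlessly enabled on $\pi'$ occurs in $\pi'$. For a fairness assumption $F$, $N$ satisfies $\mathcal{L}(F)$ if for every $F$-fair path $\pi$ from $N$ and every location $p$ of $N$, either $p$ successfully terminates on $\pi$ or $\pi$ contains infinitely many transitions involving $p$. $N$ is Padovani lock-free if for each state $M$ reachable from $N$ and each location $p$ with $\mathrm{proc}(p,M)\neq\mathbf{end}$, there is an execution path from $M$ containing a transition involving $p$. *)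

theory Defs
  imports Main "HOL-Library.Extended_Nat"
begin

text \<open>A finite indexed family (p_i, lambda_i, P_i) for i in I is represented as a list.
  Sel q l P is the thread state with an already selected output.\<close>

datatype ('p, 'l, 'x) thread =
    End
  | Send "('p \<times> 'l \<times> ('p, 'l, 'x) thread) list"
  | Recv "('p \<times> 'l \<times> ('p, 'l, 'x) thread) list"
  | Var 'x
  | Mu 'x "('p, 'l, 'x) thread"
  | Sel 'p 'l "('p, 'l, 'x) thread"

fun fv :: "('p, 'l, 'x) thread \<Rightarrow> 'x set" where
  "fv End = {}"
| "fv (Send xs) = (\<Union>(q, l, P) \<in> set xs. fv P)"
| "fv (Recv xs) = (\<Union>(q, l, P) \<in> set xs. fv P)"
| "fv (Var X) = {X}"
| "fv (Mu X P) = fv P - {X}"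
| "fv (Sel q l P) = fv P"

fun names :: "('p, 'l, 'x) thread \<Rightarrow> 'p set" where
  "names End = {}"
| "names (Send xs) = (\<Union>(q, l, P) \<in> set xs. insert q (names P))"
| "names (Recv xs) = (\<Union>(q, l, P) \<in> set xs. insert q (names P))"
| "names (Var X) = {}"
| "names (Mu X P) = names P"
| "names (Sel q l P) = insert q (names P)"

text \<open>Threads (not general thread states): nonempty internal choices, no selected
  outputs, and the excluded forms mu X. X and mu X. mu Y. P.\<close>
fun wf_thread :: "('p, 'l, 'x) thread \<Rightarrow> bool" where
  "wf_thread End = True"
| "wf_thread (Send xs) = (xs \<noteq> [] \<and> (\<forall>(q, l, P) \<in> set xs. wf_thread P))"
| "wf_thread (Recv xs) = (\<forall>(q, l, P) \<in> set xs. wf_thread P)"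
| "wf_thread (Var X) = True"
| "wf_thread (Mu X P) = (P \<noteq> Var X \<and> (\<forall>Y Q. P \<noteq> Mu Y Q) \<and> wf_thread P)"
| "wf_thread (Sel q l P) = False"

text \<open>Substitution P{Q/X}; only ever used with closed Q, so no capture can occur.\<close>
fun subst :: "'x \<Rightarrow> ('p, 'l, 'x) thread \<Rightarrow> ('p, 'l, 'x) thread \<Rightarrow> ('p, 'l, 'x) thread" where
  "subst X Q End = End"
| "subst X Q (Send xs) = Send (map (\<lambda>(q, l, P). (q, l, subst X Q P)) xs)"
| "subst X Q (Recv xs) = Recv (map (\<lambda>(q, l, P). (q, l, subst X Q P)) xs)"
| "subst X Q (Var Y) = (if X = Y then Q else Var Y)"
| "subst X Q (Mu Y P) = (if X = Y then Mu Y P else Mu Y (subst X Q P))"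
| "subst X Q (Sel q l P) = Sel q l (subst X Q P)"

text \<open>A network state modulo structural congruence is a finite partial map from
  locations to thread states; proc(p,N) = the (N p).\<close>
type_synonym ('p, 'l, 'x) net = "'p \<Rightarrow> ('p, 'l, 'x) thread option"

definition network :: "('p, 'l, 'x) net \<Rightarrow> bool" where
  "network N \<longleftrightarrow> finite (dom N) \<and>
     (\<forall>p P. N p = Some P \<longrightarrow> wf_thread P \<and> fv P = {} \<and> names P \<subseteq> dom N)"

datatype ('p, 'l) label = Tau | Comm 'p 'l 'p

inductive step :: "('p, 'l, 'x) net \<Rightarrow> ('p, 'l) label \<Rightarrow> ('p, 'l, 'x) net \<Rightarrow> bool" where
  choice: "\<lbrakk> N p = Some (Send xs); k < length xs; xs ! k = (q, l, P) \<rbrakk>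
           \<Longrightarrow> step N Tau (N(p \<mapsto> Sel q l P))"
| unfold: "N p = Some (Mu X P) \<Longrightarrow> step N Tau (N(p \<mapsto> subst X (Mu X P) P))"
| comm: "\<lbrakk> p \<noteq> q; N p = Some (Sel q l Q); N q = Some (Recv ys); k < length ys;
           ys ! k = (p, l, P) \<rbrakk>
         \<Longrightarrow> step N (Comm p l q) (N(p \<mapsto> Q, q \<mapsto> P))"

type_synonym ('p, 'l, 'x) transition = "('p, 'l, 'x) net \<times> ('p, 'l) label \<times> ('p, 'l, 'x) net"

fun involves :: "('p, 'l, 'x) transition \<Rightarrow> 'p \<Rightarrow> bool" where
  "involves (N, Tau, M) p = (p \<in> dom N \<and> N p \<noteq> M p)"
| "involves (N, Comm a l b, M) p = (p = a \<or> p = b)"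

text \<open>A path is given by states s, labels a and a length len (\<infinity> for infinite paths);
  its transitions are (s i, a i, s (Suc i)) for i < len; it is maximal.\<close>
definition is_path :: "('p, 'l, 'x) net \<Rightarrow> (nat \<Rightarrow> ('p, 'l, 'x) net) \<Rightarrow> (nat \<Rightarrow> ('p, 'l) label)
    \<Rightarrow> enat \<Rightarrow> bool" where
  "is_path N s a len \<longleftrightarrow> s 0 = N \<and>
     (\<forall>i. enat i < len \<longrightarrow> step (s i) (a i) (s (Suc i))) \<and>
     (\<forall>n. len = enat n \<longrightarrow> \<not> (\<exists>l M. step (s n) l M))"

definition path_trans :: "(nat \<Rightarrow> ('p, 'l, 'x) net) \<Rightarrow> (nat \<Rightarrow> ('p, 'l) label) \<Rightarrow> nat
    \<Rightarrow> ('p, 'l, 'x) transition" where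
  "path_trans s a i = (s i, a i, s (Suc i))"

definition relentless :: "(nat \<Rightarrow> ('p, 'l, 'x) net) \<Rightarrow> enat \<Rightarrow> nat \<Rightarrow> ('p, 'l, 'x) transition \<Rightarrow> bool" where
  "relentless s len j t \<longleftrightarrow>
     (\<forall>k. j \<le> k \<and> enat k \<le> len \<longrightarrow> (\<exists>i. k \<le> i \<and> enat i \<le> len \<and> s i = fst t))"

definition occurs_from :: "(nat \<Rightarrow> ('p, 'l, 'x) net) \<Rightarrow> (nat \<Rightarrow> ('p, 'l) label) \<Rightarrow> enat \<Rightarrow> nat
    \<Rightarrow> ('p, 'l, 'x) transition \<Rightarrow> bool" where
  "occurs_from s a len j t \<longleftrightarrow> (\<exists>i. j \<le> i \<and> enat i < len \<and> path_trans s a i = t)"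

definition ST_fair :: "(nat \<Rightarrow> ('p, 'l, 'x) net) \<Rightarrow> (nat \<Rightarrow> ('p, 'l) label) \<Rightarrow> enat \<Rightarrow> bool" where
  "ST_fair s a len \<longleftrightarrow>
     (\<forall>j t. enat j \<le> len \<longrightarrow> (case t of (M, l, M') \<Rightarrow> step M l M') \<longrightarrow> relentless s len j t
        \<longrightarrow> occurs_from s a len j t)"

definition satisfies_L_ST :: "('p, 'l, 'x) net \<Rightarrow> bool" where
  "satisfies_L_ST N \<longleftrightarrow>
     (\<forall>s a len. is_path N s a len \<longrightarrow> ST_fair s a len \<longrightarrow>
        (\<forall>p \<in> dom N. (\<exists>i. enat i \<le> len \<and> s i p = Some End) \<or>
                      infinite {i. enat i < len \<and> involves (path_trans s a i) p}))"

definition padovani_lock_free :: "('p, 'l, 'x) net \<Rightarrow> bool" where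
  "padovani_lock_free N \<longleftrightarrow>
     (\<forall>M. (\<lambda>A B. \<exists>l. step A l B)\<^sup>*\<^sup>* N M \<longrightarrow>
        (\<forall>p \<in> dom M. M p \<noteq> Some End \<longrightarrow>
           (\<exists>s a len. is_path M s a len \<and> (\<exists>i. enat i < len \<and> involves (path_trans s a i) p))))"

end

theory Submission
  imports Defs "HOL-Library.Infinite_Set"
begin

(* A thread only ever evolves into finitely many thread states (unfoldings of its subterms), so a
   network has finitely many reachable states and transitions. Hence every finite execution
   extends to a strongly fair path: a scheduler enumerates each reachable transition infinitely
   often and, in round n, drives the network to the source of the n-th transition and fires it
   whenever that source is still reachable.

   Lock-freedom gives L(ST): a maximal finite path ends in a deadlock, where lock-freedom forces
   every location to have terminated; on an infinite fair path some state S recurs forever, and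
   if p moves only finitely often, lock-freedom supplies an execution from S involving p, each of
   whose transitions strong fairness forces to occur infinitely often. Conversely, if p has not
   terminated in a reachable state M but no execution from M involves p, then p is frozen from M
   on, and a fair path through M violates L(ST). *)

section \<open>Thread derivatives\<close>

inductive thread_step :: "('p, 'l, 'x) thread \<Rightarrow> ('p, 'l, 'x) thread \<Rightarrow> bool" where
  select: "(q, l, P) \<in> set xs \<Longrightarrow> thread_step (Send xs) (Sel q l P)"
| unfold: "thread_step (Mu X P) (subst X (Mu X P) P)"
| send: "thread_step (Sel q l P) P"
| receive: "(p, l, P) \<in> set ys \<Longrightarrow> thread_step (Recv ys) P"

inductive_cases thread_stepE: "thread_step End R" "thread_step (Send xs) R"
  "thread_step (Recv xs) R" "thread_step (Var X) R" "thread_step (Mu X P) R"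
  "thread_step (Sel q l P) R"

fun msubst :: "('x \<Rightarrow> ('p, 'l, 'x) thread option) \<Rightarrow> ('p, 'l, 'x) thread \<Rightarrow> ('p, 'l, 'x) thread" where
  "msubst \<sigma> End = End"
| "msubst \<sigma> (Send xs) = Send (map (\<lambda>(q, l, P). (q, l, msubst \<sigma> P)) xs)"
| "msubst \<sigma> (Recv xs) = Recv (map (\<lambda>(q, l, P). (q, l, msubst \<sigma> P)) xs)"
| "msubst \<sigma> (Var Y) = (case \<sigma> Y of Some Q \<Rightarrow> Q | None \<Rightarrow> Var Y)"
| "msubst \<sigma> (Mu Y P) = Mu Y (msubst (\<sigma>(Y := None)) P)"
| "msubst \<sigma> (Sel q l P) = Sel q l (msubst \<sigma> P)"

text \<open>\<open>derivatives \<sigma> P\<close> over-approximates the thread states reachable from \<open>msubst \<sigma> P\<close>,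
  where \<open>\<sigma>\<close> maps the free variables of the subterm \<open>P\<close> to the closed recursions they stand for.\<close>

fun derivatives :: "('x \<Rightarrow> ('p, 'l, 'x) thread option) \<Rightarrow> ('p, 'l, 'x) thread \<Rightarrow> ('p, 'l, 'x) thread set" where
  "derivatives \<sigma> End = {End}"
| "derivatives \<sigma> (Send xs) = insert (msubst \<sigma> (Send xs))
      (\<Union>(q, l, P) \<in> set xs. insert (Sel q l (msubst \<sigma> P)) (derivatives \<sigma> P))"
| "derivatives \<sigma> (Recv xs) = insert (msubst \<sigma> (Recv xs)) (\<Union>(q, l, P) \<in> set xs. derivatives \<sigma> P)"
| "derivatives \<sigma> (Var Y) = {msubst \<sigma> (Var Y)}"
| "derivatives \<sigma> (Mu Y P) =
      insert (msubst \<sigma> (Mu Y P)) (derivatives (\<sigma>(Y \<mapsto> msubst \<sigma> (Mu Y P))) P)"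
| "derivatives \<sigma> (Sel q l P) = insert (msubst \<sigma> (Sel q l P)) (derivatives \<sigma> P)"

lemma finite_derivatives: "finite (derivatives \<sigma> P)"
  by (induction \<sigma> P rule: derivatives.induct) (simp_all del: fun_upd_apply, auto)

lemma msubst_in_derivatives: "msubst \<sigma> P \<in> derivatives \<sigma> P"
  by (cases P) auto

definition closed_env :: "('x \<Rightarrow> ('p, 'l, 'x) thread option) \<Rightarrow> bool" where
  "closed_env \<sigma> \<longleftrightarrow> (\<forall>X Q. \<sigma> X = Some Q \<longrightarrow> fv Q = {})"

lemma fv_msubst: "closed_env \<sigma> \<Longrightarrow> fv (msubst \<sigma> P) = fv P - dom \<sigma>"
proof (induction \<sigma> P rule: msubst.induct)
  case (4 \<sigma> Y)
  then show ?case by (auto simp: closed_env_def split: option.splits)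
next
  case (5 \<sigma> Y P)
  have "closed_env (\<sigma>(Y := None))"
    using "5.prems" by (auto simp: closed_env_def)
  then have "fv (msubst (\<sigma>(Y := None)) P) = fv P - dom (\<sigma>(Y := None))"
    by (rule "5.IH")
  then show ?case by auto
qed fastforce+

lemma subst_fresh: "X \<notin> fv P \<Longrightarrow> subst X Q P = P"
  by (induction X Q P rule: subst.induct) (auto intro!: map_idI)

lemma msubst_empty: "msubst Map.empty P = P"
  by (induction P) (auto intro!: map_idI)

lemma subst_msubst:
  assumes "closed_env \<sigma>" and "fv Q = {}"
  shows "subst X Q (msubst (\<sigma>(X := None)) P) = msubst (\<sigma>(X \<mapsto> Q)) P"
  using assms
proof (induction P arbitrary: \<sigma>)
  case (Var Y)
  then show ?case by (auto simp: closed_env_def subst_fresh split: option.splits)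
next
  case (Mu Y P)
  show ?case
  proof (cases "X = Y")
    case False
    have "closed_env (\<sigma>(Y := None))"
      using Mu.prems by (auto simp: closed_env_def)
    then have "subst X Q (msubst (\<sigma>(Y := None, X := None)) P) = msubst (\<sigma>(Y := None, X \<mapsto> Q)) P"
      using Mu.IH Mu.prems(2) by blast
    with False show ?thesis
      by (simp add: fun_upd_twist[OF False] del: fun_upd_apply)
  qed (simp del: fun_upd_apply)
qed (fastforce simp: closed_env_def)+

lemma derivatives_step:
  assumes "closed_env \<sigma>" and "fv P \<subseteq> dom \<sigma>"
    and "R \<in> derivatives \<sigma> P" and "thread_step R R'"
  shows "R' \<in> derivatives \<sigma> P \<or> (\<exists>X Q. \<sigma> X = Some Q \<and> thread_step Q R')"
  using assms
proof (induction \<sigma> P arbitrary: R rule: derivatives.induct)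
  case (2 \<sigma> xs)
  from "2.prems"(3) consider "R = msubst \<sigma> (Send xs)"
    | q l P where "(q, l, P) \<in> set xs" "R = Sel q l (msubst \<sigma> P)"
    | q l P where "(q, l, P) \<in> set xs" "R \<in> derivatives \<sigma> P"
    by auto
  then show ?case
  proof cases
    case 1
    with "2.prems"(4) show ?thesis by (force elim!: thread_stepE)
  next
    case (2 q l P)
    with "2.prems"(4) have "R' = msubst \<sigma> P"
      by (auto elim: thread_stepE)
    then show ?thesis
      using 2(1) msubst_in_derivatives[of \<sigma> P] by (auto intro!: bexI[of _ "(q, l, P)"])
  next
    case (3 q l P)
    with "2.IH"[OF 3(1) refl refl] "2.prems" show ?thesis by (auto intro!: bexI[of _ "(q, l, P)"])
  qed
next
  case (3 \<sigma> xs)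
  from "3.prems"(3) consider "R = msubst \<sigma> (Recv xs)"
    | q l P where "(q, l, P) \<in> set xs" "R \<in> derivatives \<sigma> P"
    by auto
  then show ?case
  proof cases
    case 1
    with "3.prems"(4) obtain q l P where "(q, l, P) \<in> set xs" "R' = msubst \<sigma> P"
      by (auto elim!: thread_stepE)
    then show ?thesis
      using msubst_in_derivatives[of \<sigma> P] by (auto intro!: bexI[of _ "(q, l, P)"])
  next
    case (2 q l P)
    with "3.IH"[OF 2(1) refl refl] "3.prems" show ?thesis by (auto intro!: bexI[of _ "(q, l, P)"])
  qed
next
  case (5 \<sigma> Y P)
  let ?M = "msubst \<sigma> (Mu Y P)"
  let ?\<sigma> = "\<sigma>(Y \<mapsto> ?M)"
  have "fv ?M = {}"
    using "5.prems"(1,2) fv_msubst[of \<sigma> "Mu Y P"] by auto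
  then have unfold_M: "R' \<in> derivatives \<sigma> (Mu Y P)" if "thread_step ?M R'" for R'
    using that subst_msubst[OF "5.prems"(1)] msubst_in_derivatives[of ?\<sigma> P]
    by (auto elim: thread_stepE)
  show ?case
  proof (cases "R = ?M")
    case True
    then show ?thesis using "5.prems"(4) unfold_M by blast
  next
    case False
    have "closed_env ?\<sigma>"
      using "5.prems"(1) \<open>fv ?M = {}\<close> by (auto simp: closed_env_def)
    moreover have "fv P \<subseteq> dom ?\<sigma>"
      using "5.prems"(2) by auto
    moreover have "R \<in> derivatives ?\<sigma> P"
      using "5.prems"(3) False by simp
    ultimately have "R' \<in> derivatives ?\<sigma> P \<or> (\<exists>X Q. ?\<sigma> X = Some Q \<and> thread_step Q R')"
      using "5.IH" "5.prems"(4) by blast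
    then show ?thesis
      using unfold_M by (auto split: if_splits)
  qed
next
  case (6 \<sigma> q l P)
  then show ?case
    using msubst_in_derivatives[of \<sigma> P] by (auto elim: thread_stepE)
qed (auto elim: thread_stepE split: option.splits)

lemma thread_reachable_in_derivatives:
  assumes "thread_step\<^sup>*\<^sup>* P R" and "fv P = {}"
  shows "R \<in> derivatives Map.empty P"
  using assms
proof (induction rule: rtranclp_induct)
  case base
  then show ?case using msubst_in_derivatives[of Map.empty P] by (simp add: msubst_empty)
next
  case (step R R')
  then show ?case
    using derivatives_step[of Map.empty P R R'] by (simp add: closed_env_def)
qed

abbreviation reach :: "('p, 'l, 'x) net \<Rightarrow> ('p, 'l, 'x) net \<Rightarrow> bool" where
  "reach \<equiv> (\<lambda>A B. \<exists>l. step A l B)\<^sup>*\<^sup>*"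

lemma step_dom: "step N l M \<Longrightarrow> dom M = dom N"
  by (induction rule: step.induct) (auto split: if_splits)

lemma step_thread_step:
  "step N l M \<Longrightarrow> M p \<noteq> N p \<Longrightarrow> \<exists>P R. N p = Some P \<and> M p = Some R \<and> thread_step P R"
proof (induction rule: step.induct)
  case (choice N p' xs k q l P)
  then have "thread_step (Send xs) (Sel q l P)"
    by (metis nth_mem thread_step.select)
  with choice show ?case by auto
next
  case (unfold N p' X P)
  then show ?case by (auto intro: thread_step.unfold)
next
  case (comm p' q N l Q ys k P)
  then have "thread_step (Recv ys) P"
    by (metis nth_mem thread_step.receive)
  with comm show ?case by (auto intro: thread_step.send)
qed

lemma step_uninvolved: "step N l M \<Longrightarrow> \<not> involves (N, l, M) p \<Longrightarrow> M p = N p"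
  by (induction rule: step.induct) auto

lemma step_End: "step N l M \<Longrightarrow> N p = Some End \<Longrightarrow> M p = Some End"
  using step_thread_step[of N l M p] by (auto elim: thread_stepE)

lemma reach_End: "reach N M \<Longrightarrow> N p = Some End \<Longrightarrow> M p = Some End"
  by (induction rule: rtranclp_induct) (auto dest: step_End)

lemma reach_dom: "reach N M \<Longrightarrow> dom M = dom N"
  by (induction rule: rtranclp_induct) (metis step_dom)+

lemma reach_thread_reachable:
  "reach N M \<Longrightarrow> N p = Some P \<Longrightarrow> \<exists>R. M p = Some R \<and> thread_step\<^sup>*\<^sup>* P R"
proof (induction rule: rtranclp_induct)
  case (step M M')
  then obtain R l where "M p = Some R" "thread_step\<^sup>*\<^sup>* P R" "step M l M'"
    by blast
  then show ?case
    using step_thread_step[of M l M' p] by (auto intro: rtranclp.rtrancl_into_rtrancl)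
qed simp

lemma finite_reachable:
  assumes "network N"
  shows "finite {M. reach N M}"
proof -
  let ?D = "\<Union>p\<in>dom N. derivatives Map.empty (the (N p))"
  have "ran M \<subseteq> ?D" if "reach N M" for M
  proof
    fix R assume "R \<in> ran M"
    then obtain p where "M p = Some R" by (auto simp: ran_def)
    moreover from this obtain P where P: "N p = Some P"
      using reach_dom[OF \<open>reach N M\<close>] by blast
    ultimately have "thread_step\<^sup>*\<^sup>* P R"
      using reach_thread_reachable[OF \<open>reach N M\<close> P] by auto
    moreover have "fv P = {}"
      using assms P by (auto simp: network_def)
    ultimately show "R \<in> ?D"
      using P thread_reachable_in_derivatives by force
  qed
  then have "{M. reach N M} \<subseteq> {M. dom M = dom N \<and> ran M \<subseteq> ?D}"
    using reach_dom by blast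
  moreover have "finite {M. dom M = dom N \<and> ran M \<subseteq> ?D}"
    using assms finite_derivatives
    by (intro finite_set_of_finite_maps) (auto simp: network_def)
  ultimately show ?thesis by (rule finite_subset)
qed

definition label_candidates :: "('p, 'l, 'x) net \<Rightarrow> ('p, 'l) label set" where
  "label_candidates N =
     insert Tau ((\<lambda>p. case N p of Some (Sel q l Q) \<Rightarrow> Comm p l q | _ \<Rightarrow> Tau) ` dom N)"

lemma step_label_candidates: "step N l M \<Longrightarrow> l \<in> label_candidates N"
proof (induction rule: step.induct)
  case (comm p q N l Q ys k P)
  then show ?case
    unfolding label_candidates_def by (intro insertI2 image_eqI[where x = p]) auto
qed (auto simp: label_candidates_def)

lemma finite_reachable_transitions:
  assumes "finite {M. reach N M}" and "finite (dom N)"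
  shows "finite {(A, l, B). reach N A \<and> step A l B}"
proof (rule finite_subset)
  let ?R = "{M. reach N M}"
  show "{(A, l, B). reach N A \<and> step A l B} \<subseteq> (\<Union>A\<in>?R. {A} \<times> label_candidates A \<times> ?R)"
    by (auto intro: step_label_candidates rtranclp.rtrancl_into_rtrancl)
  have "finite (label_candidates A)" if "A \<in> ?R" for A
    using assms(2) reach_dom[of N A] that by (simp add: label_candidates_def)
  then show "finite (\<Union>A\<in>?R. {A} \<times> label_candidates A \<times> ?R)"
    using assms(1) by blast
qed

lemma path_reach_between:
  assumes "is_path N s a len" and "i \<le> j" and "enat j \<le> len"
  shows "reach (s i) (s j)"
  using assms(2,3)
proof (induction j)
  case (Suc j)
  show ?case
  proof (cases "i = Suc j")
    case False
    then have "reach (s i) (s j)" and "enat j < len"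
      using Suc by (auto simp: Suc_ile_eq)
    then show ?thesis
      using assms(1) by (auto simp: is_path_def intro: rtranclp.rtrancl_into_rtrancl)
  qed simp
qed simp

lemma path_reach: "is_path N s a len \<Longrightarrow> enat i \<le> len \<Longrightarrow> reach N (s i)"
  using path_reach_between[of N s a len 0 i] by (simp add: is_path_def)

type_synonym ('p, 'l, 'x) run = "(('p, 'l) label \<times> ('p, 'l, 'x) net) list"

fun exec :: "('p, 'l, 'x) net \<Rightarrow> ('p, 'l, 'x) run \<Rightarrow> ('p, 'l, 'x) net \<Rightarrow> bool" where
  "exec S [] T \<longleftrightarrow> S = T"
| "exec S ((l, S') # \<rho>) T \<longleftrightarrow> step S l S' \<and> exec S' \<rho> T"

fun exec_state :: "('p, 'l, 'x) net \<Rightarrow> ('p, 'l, 'x) run \<Rightarrow> nat \<Rightarrow> ('p, 'l, 'x) net" where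
  "exec_state S \<rho> 0 = S"
| "exec_state S \<rho> (Suc i) = snd (\<rho> ! i)"

definition exec_trans :: "('p, 'l, 'x) net \<Rightarrow> ('p, 'l, 'x) run \<Rightarrow> nat \<Rightarrow> ('p, 'l, 'x) transition" where
  "exec_trans S \<rho> i = (exec_state S \<rho> i, fst (\<rho> ! i), snd (\<rho> ! i))"

lemma exec_append: "exec S (\<rho> @ \<rho>') T \<longleftrightarrow> (\<exists>U. exec S \<rho> U \<and> exec U \<rho>' T)"
  by (induction S \<rho> T rule: exec.induct) auto

lemma exec_state_Cons: "exec_state S ((l, S') # \<rho>) (Suc i) = exec_state S' \<rho> i"
  by (cases i) auto

lemma exec_last: "exec S \<rho> T \<Longrightarrow> exec_state S \<rho> (length \<rho>) = T"
  by (induction S \<rho> T rule: exec.induct) (simp_all add: exec_state_Cons del: exec_state.simps(2))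

lemma exec_state_append: "i \<le> length \<rho> \<Longrightarrow> exec_state S (\<rho> @ \<rho>') i = exec_state S \<rho> i"
  by (cases i) (auto simp: nth_append)

lemma exec_trans_snoc:
  "exec S \<rho> A \<Longrightarrow> exec_trans S (\<rho> @ [(l, B)]) (length \<rho>) = (A, l, B)"
  by (simp add: exec_trans_def exec_state_append exec_last)

lemma reach_exec: "reach S T \<Longrightarrow> \<exists>\<rho>. exec S \<rho> T"
proof (induction rule: converse_rtranclp_induct)
  case base
  then show ?case using exec.simps(1) by blast
next
  case (step S S')
  then show ?case using exec.simps(2) by blast
qed

section \<open>A strongly fair scheduler\<close>

definition round_run :: "(nat \<Rightarrow> ('p, 'l, 'x) transition) \<Rightarrow> nat \<Rightarrow> ('p, 'l, 'x) net
    \<Rightarrow> ('p, 'l, 'x) run" where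
  "round_run e n S = (case e n of (A, l, B) \<Rightarrow>
     if step A l B \<and> reach S A then (SOME \<rho>. exec S \<rho> A) @ [(l, B)]
     else if \<exists>x. step S (fst x) (snd x) then [SOME x. step S (fst x) (snd x)]
     else [])"

lemma round_run_exec: "\<exists>T. exec S (round_run e n S) T"
proof -
  obtain A l B where e: "e n = (A, l, B)"
    by (cases "e n") auto
  show ?thesis
  proof (cases "step A l B \<and> reach S A")
    case True
    then have "exec S (SOME \<rho>. exec S \<rho> A) A"
      using reach_exec someI_ex by metis
    with True e show ?thesis
      by (auto simp: round_run_def exec_append)
  next
    case False
    let ?x = "SOME x. step S (fst x) (snd x)"
    show ?thesis
    proof (cases "\<exists>x. step S (fst x) (snd x)")
      case True
      then have "step S (fst ?x) (snd ?x)"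
        by (rule someI_ex)
      then have "exec S [?x] (snd ?x)"
        by (cases ?x) simp
      with True False e show ?thesis
        by (auto simp: round_run_def)
    qed (use False e in \<open>auto simp: round_run_def\<close>)
  qed
qed

lemma round_run_Nil: "round_run e n S = [] \<Longrightarrow> \<not> step S l M"
  by (cases "e n") (auto simp: round_run_def split: if_splits)

lemma round_run_fires:
  assumes "e n = (A, l, B)" and "step A l B" and "reach S A"
  shows "\<exists>\<rho>. round_run e n S = \<rho> @ [(l, B)] \<and> exec S \<rho> A"
proof -
  have "exec S (SOME \<rho>. exec S \<rho> A) A"
    using assms(3) reach_exec someI_ex by metis
  with assms show ?thesis
    by (auto simp: round_run_def)
qed

type_synonym ('p, 'l, 'x) sched_state = "('p, 'l, 'x) net \<times> nat \<times> ('p, 'l, 'x) run"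

text \<open>A scheduler state \<open>(S, n, \<rho>)\<close> consists of the current network, the number of the round in
  progress, and the steps of that round still to be taken.\<close>

fun sched_next :: "(nat \<Rightarrow> ('p, 'l, 'x) transition) \<Rightarrow> ('p, 'l, 'x) sched_state
    \<Rightarrow> ('p, 'l, 'x) sched_state" where
  "sched_next e (S, n, []) = (S, n, [])"
| "sched_next e (S, n, (l, S') # \<rho>) =
     (if \<rho> = [] then (S', Suc n, round_run e n S') else (S', n, \<rho>))"

lemma sched_next_Cons:
  "sched_next e (S, n, x # \<rho>) =
     (if \<rho> = [] then (snd x, Suc n, round_run e n (snd x)) else (snd x, n, \<rho>))"
  by (cases x) simp

fun sched_inv :: "('p, 'l, 'x) sched_state \<Rightarrow> bool" where
  "sched_inv (S, n, \<rho>) \<longleftrightarrow> (\<rho> = [] \<longrightarrow> (\<forall>l M. \<not> step S l M)) \<and> (\<exists>T. exec S \<rho> T)"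

lemma sched_inv_next: "sched_inv c \<Longrightarrow> sched_inv (sched_next e c)"
  by (induction e c rule: sched_next.induct)
    (auto simp: round_run_exec dest: round_run_Nil exec.simps(2)[THEN iffD1])

locale scheduler =
  fixes e :: "nat \<Rightarrow> ('p, 'l, 'x) transition" and c0 :: "('p, 'l, 'x) sched_state"
  assumes sched_inv_c0: "sched_inv c0"
begin

definition conf :: "nat \<Rightarrow> ('p, 'l, 'x) sched_state" where
  "conf i = (sched_next e ^^ i) c0"

definition s :: "nat \<Rightarrow> ('p, 'l, 'x) net" where
  "s i = fst (conf i)"

definition round_no :: "nat \<Rightarrow> nat" where
  "round_no i = fst (snd (conf i))"

definition pending :: "nat \<Rightarrow> ('p, 'l, 'x) run" where
  "pending i = snd (snd (conf i))"

definition a :: "nat \<Rightarrow> ('p, 'l) label" where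
  "a i = fst (hd (pending i))"

definition len :: enat where
  "len = (if \<exists>i. pending i = [] then enat (LEAST i. pending i = []) else \<infinity>)"

lemma conf_eq: "conf i = (s i, round_no i, pending i)"
  by (simp add: s_def round_no_def pending_def)

lemma conf_0: "conf 0 = c0"
  by (simp add: conf_def)

lemma conf_Suc: "conf (Suc i) = sched_next e (conf i)"
  by (simp add: conf_def)

lemma sched_inv_conf: "sched_inv (conf i)"
  by (induction i) (simp_all add: conf_Suc sched_inv_next, simp add: conf_def sched_inv_c0)

lemma conf_stable:
  assumes "pending i = []" and "i \<le> j"
  shows "conf j = conf i"
  using assms(2)
proof (induction j rule: dec_induct)
  case (step j)
  then show ?case
    using assms(1) conf_eq[of i] by (simp add: conf_Suc)
qed simp

lemma step_s: "pending i \<noteq> [] \<Longrightarrow> step (s i) (a i) (s (Suc i))"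
proof -
  assume "pending i \<noteq> []"
  then obtain l S' \<rho> where pending: "pending i = (l, S') # \<rho>"
    by (metis list.exhaust prod.collapse)
  have "sched_inv (s i, round_no i, (l, S') # \<rho>)"
    using sched_inv_conf[of i] pending by (simp only: conf_eq)
  then have "step (s i) l S'"
    by auto
  moreover have "conf (Suc i) = sched_next e (s i, round_no i, (l, S') # \<rho>)"
    by (metis conf_Suc conf_eq pending)
  then have "s (Suc i) = S'"
    by (simp add: s_def)
  ultimately show ?thesis
    using pending by (simp add: a_def)
qed

lemma stuck_s: "pending i = [] \<Longrightarrow> \<not> step (s i) l M"
  using sched_inv_conf[of i] by (simp add: conf_eq)

lemma less_len_iff: "enat i < len \<longleftrightarrow> pending i \<noteq> []"
proof (cases "\<exists>i. pending i = []")
  case True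
  let ?m = "LEAST i. pending i = []"
  have "pending ?m = []"
    using True by (rule LeastI_ex)
  then have stuck: "pending i = []" if "?m \<le> i"
    using conf_stable[OF _ that] by (simp add: pending_def)
  have "i < ?m \<longleftrightarrow> pending i \<noteq> []"
  proof
    show "i < ?m \<Longrightarrow> pending i \<noteq> []"
      by (rule not_less_Least)
    show "pending i \<noteq> [] \<Longrightarrow> i < ?m"
      using stuck not_le by blast
  qed
  then show ?thesis
    using True by (simp add: len_def)
qed (simp add: len_def)

lemma pending_len: "len = enat m \<Longrightarrow> pending m = []"
  using less_len_iff[of m] by (metis less_irrefl)

lemma is_path_s: "is_path (fst c0) s a len"
  unfolding is_path_def
proof (intro conjI allI impI)
  show "s 0 = fst c0"
    by (simp add: s_def conf_def)
  show "step (s i) (a i) (s (Suc i))" if "enat i < len" for i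
    using that step_s less_len_iff by blast
  show "\<not> (\<exists>l M. step (s n) l M)" if "len = enat n" for n
    using that stuck_s pending_len by blast
qed

lemma conf_pending:
  assumes "conf i = (S, n, \<rho>)" and "k < length \<rho>"
  shows "conf (i + k) = (exec_state S \<rho> k, n, drop k \<rho>)"
  using assms(2)
proof (induction k)
  case (Suc k)
  then have "conf (i + k) = (exec_state S \<rho> k, n, \<rho> ! k # drop (Suc k) \<rho>)"
    by (simp add: Cons_nth_drop_Suc)
  then show ?case
    using Suc.prems by (simp add: conf_Suc sched_next_Cons)
qed (simp add: assms(1))

lemma path_trans_pending:
  assumes "conf i = (S, n, \<rho>)" and "k < length \<rho>"
  shows "enat (i + k) < len" and "path_trans s a (i + k) = exec_trans S \<rho> k"
proof -
  have conf_k: "conf (i + k) = (exec_state S \<rho> k, n, \<rho> ! k # drop (Suc k) \<rho>)"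
    using conf_pending[OF assms] assms(2) by (simp add: Cons_nth_drop_Suc)
  then show "enat (i + k) < len"
    by (simp add: less_len_iff pending_def)
  have "s (Suc (i + k)) = snd (\<rho> ! k)"
    using conf_k by (simp add: s_def conf_Suc sched_next_Cons)
  with conf_k show "path_trans s a (i + k) = exec_trans S \<rho> k"
    by (simp add: path_trans_def exec_trans_def s_def a_def pending_def)
qed

lemma conf_round_end:
  assumes "conf i = (S, n, \<rho>)" and "\<rho> \<noteq> []"
  shows "conf (i + length \<rho>) =
    (exec_state S \<rho> (length \<rho>), Suc n, round_run e n (exec_state S \<rho> (length \<rho>)))"
proof -
  obtain k where k: "length \<rho> = Suc k"
    using assms(2) by (cases \<rho>) auto
  then have "drop k \<rho> = [\<rho> ! k]"
    by (metis Cons_nth_drop_Suc drop_all le_refl lessI)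
  then have "conf (i + k) = (exec_state S \<rho> k, n, [\<rho> ! k])"
    using conf_pending[OF assms(1), of k] k by simp
  then show ?thesis
    using k by (simp add: conf_Suc sched_next_Cons)
qed

lemma path_prefix:
  assumes "conf 0 = (S, n, \<rho>)" and "\<rho> \<noteq> []" and "exec S \<rho> T"
  shows "enat (length \<rho>) \<le> len" and "\<forall>k < length \<rho>. path_trans s a k = exec_trans S \<rho> k"
    and "s (length \<rho>) = T"
proof -
  show "\<forall>k < length \<rho>. path_trans s a k = exec_trans S \<rho> k"
    using path_trans_pending(2)[OF assms(1)] by simp
  have "enat (length \<rho> - 1) < len"
    using path_trans_pending(1)[OF assms(1), of "length \<rho> - 1"] assms(2) by simp
  then show "enat (length \<rho>) \<le> len"
    using assms(2) by (cases "length \<rho>") (simp_all add: Suc_ile_eq)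
  show "s (length \<rho>) = T"
    using conf_round_end[OF assms(1,2)] exec_last[OF assms(3)] by (simp add: s_def)
qed

lemma round_no_Suc:
  "round_no (Suc i) = round_no i \<or>
   round_no (Suc i) = Suc (round_no i) \<and> pending (Suc i) = round_run e (round_no i) (s (Suc i))"
  using conf_Suc[of i] conf_eq[of i] conf_eq[of "Suc i"]
  by (cases "pending i") (auto simp: sched_next_Cons split: if_splits)

lemma mono_round_no: "mono round_no"
  unfolding mono_iff_le_Suc
proof
  show "round_no n \<le> round_no (Suc n)" for n
    using round_no_Suc[of n] by linarith
qed

lemma round_no_unbounded: "len = \<infinity> \<Longrightarrow> \<exists>i. m \<le> round_no i"
proof (induction m)
  case (Suc m)
  then obtain i where "m \<le> round_no i"
    by blast
  moreover have "pending i \<noteq> []"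
    using less_len_iff[of i] Suc.prems by simp
  then have "round_no (i + length (pending i)) = Suc (round_no i)"
    using conf_round_end[OF conf_eq[of i]] by (simp add: round_no_def)
  ultimately show ?case
    by (metis Suc_le_mono)
qed simp

lemma round_starts:
  assumes "len = \<infinity>" and "round_no j \<le> n"
  shows "\<exists>i > j. pending i = round_run e n (s i)"
proof -
  let ?i = "LEAST i. Suc n \<le> round_no i"
  have started: "Suc n \<le> round_no ?i"
    using round_no_unbounded[OF assms(1)] by (rule LeastI_ex)
  have "j < ?i"
  proof (rule ccontr)
    assume "\<not> j < ?i"
    then have "round_no ?i \<le> round_no j"
      using monoD[OF mono_round_no] by simp
    with started assms(2) show False
      by simp
  qed
  then obtain i' where i': "?i = Suc i'"
    using lessE by blast
  have "round_no i' < Suc n"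
    using not_less_Least[of i' "\<lambda>i. Suc n \<le> round_no i"] i' by simp
  with started i' have "round_no (Suc i') \<noteq> round_no i'"
    by simp
  then have "round_no (Suc i') = Suc (round_no i')"
    and pending: "pending (Suc i') = round_run e (round_no i') (s (Suc i'))"
    using round_no_Suc[of i'] by auto
  then have "round_no i' = n"
    using started i' \<open>round_no i' < Suc n\<close> by simp
  with pending \<open>j < ?i\<close> i' show ?thesis
    by auto
qed

lemma round_fires:
  assumes "len = \<infinity>" and "round_no j \<le> n"
    and "e n = (A, l, B)" and "step A l B" and "\<forall>k. \<exists>i\<ge>k. s i = A"
  shows "\<exists>i > j. path_trans s a i = (A, l, B)"
proof -
  obtain i where i: "i > j" "pending i = round_run e n (s i)"
    using round_starts[OF assms(1,2)] by blast
  obtain i' where "i \<le> i'" "s i' = A"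
    using assms(5) by blast
  then have "reach (s i) A"
    using path_reach_between[OF is_path_s] assms(1) by auto
  then obtain \<rho> where \<rho>: "pending i = \<rho> @ [(l, B)]" "exec (s i) \<rho> A"
    using round_run_fires[of e n A l B "s i", OF assms(3,4)] i(2) by metis
  then have "path_trans s a (i + length \<rho>) = exec_trans (s i) (\<rho> @ [(l, B)]) (length \<rho>)"
    using path_trans_pending(2)[OF conf_eq] by simp
  also have "\<dots> = (A, l, B)"
    using \<rho>(2) by (rule exec_trans_snoc)
  finally show ?thesis
    using i(1) by (intro exI[of _ "i + length \<rho>"]) simp
qed

lemma ST_fair_s:
  assumes enum: "\<And>t m. t \<in> {(A, l, B). reach (fst c0) A \<and> step A l B} \<Longrightarrow> \<exists>n\<ge>m. e n = t"
  shows "ST_fair s a len"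
  unfolding ST_fair_def
proof (intro allI impI)
  fix j t
  assume "enat j \<le> len" and "case t of (A, l, B) \<Rightarrow> step A l B"
    and relentless: "relentless s len j t"
  then obtain A l B where t: "t = (A, l, B)" and "step A l B"
    by (cases t) auto
  show "occurs_from s a len j t"
  proof (cases len)
    case (enat m)
    then have "s m = A"
      using relentless \<open>enat j \<le> len\<close> t by (force simp: relentless_def)
    then show ?thesis
      using stuck_s pending_len enat \<open>step A l B\<close> by blast
  next
    case infinity
    have recurrent: "\<forall>k. \<exists>i\<ge>k. s i = A"
    proof
      fix k
      have "\<exists>i\<ge>max j k. s i = A"
        using relentless[unfolded relentless_def, rule_format, of "max j k"] t infinity by auto
      then show "\<exists>i\<ge>k. s i = A"
        by auto
    qed
    then have "reach (fst c0) A"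
      using path_reach[OF is_path_s] infinity by auto
    then obtain n where "round_no j \<le> n" "e n = (A, l, B)"
      using enum t \<open>step A l B\<close> by blast
    then obtain i where "j < i" "path_trans s a i = t"
      using round_fires[OF infinity _ _ \<open>step A l B\<close> recurrent] t by blast
    then show ?thesis
      using infinity unfolding occurs_from_def by (auto intro!: exI[of _ i])
  qed
qed

end

lemma infinitely_often_enumeration:
  assumes "finite T"
  shows "\<exists>e :: nat \<Rightarrow> 'a. \<forall>t \<in> T. \<forall>m. \<exists>n\<ge>m. e n = t"
proof -
  obtain ts where ts: "set ts = T"
    using finite_list[OF assms] by blast
  have "\<exists>n\<ge>m. ts ! (n mod length ts) = t" if t: "t \<in> T" for t m
  proof -
    obtain k where k: "k < length ts" "ts ! k = t"
      using t ts by (meson in_set_conv_nth)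
    then have "ts ! ((m * length ts + k) mod length ts) = t"
      by simp
    moreover have "m \<le> m * length ts + k"
      using k(1) by (cases "length ts") auto
    ultimately show ?thesis
      by blast
  qed
  then show ?thesis
    by (intro exI[of _ "\<lambda>n. ts ! (n mod length ts)"]) blast
qed

lemma fair_path_extending:
  assumes "finite {M. reach S M}" and "finite (dom S)" and "exec S \<rho> T"
  shows "\<exists>s a len. is_path S s a len \<and> ST_fair s a len \<and>
    enat (length \<rho>) \<le> len \<and> (\<forall>k < length \<rho>. path_trans s a k = exec_trans S \<rho> k) \<and>
    s (length \<rho>) = T"
proof -
  obtain e :: "nat \<Rightarrow> _" where enum: "\<forall>t \<in> {(A, l, B). reach S A \<and> step A l B}. \<forall>m. \<exists>n\<ge>m. e n = t"
    using infinitely_often_enumeration[OF finite_reachable_transitions[OF assms(1,2)]] by blast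
  define c0 where "c0 = (if \<rho> = [] then (S, 0::nat, round_run e 0 S) else (S, 0, \<rho>))"
  have "sched_inv c0"
  proof (cases "\<rho> = []")
    case True
    then show ?thesis
      using round_run_exec[of S e 0] round_run_Nil[of e 0 S] by (simp add: c0_def)
  next
    case False
    then show ?thesis
      using assms(3) by (auto simp: c0_def)
  qed
  then interpret scheduler e c0
    by (rule scheduler.intro)
  have c0: "fst c0 = S"
    by (simp add: c0_def)
  have path: "is_path S s a len"
    using is_path_s c0 by simp
  have fair: "ST_fair s a len"
    using enum c0 by (intro ST_fair_s) auto
  show ?thesis
  proof (cases "\<rho> = []")
    case True
    then have "s 0 = T"
      using path assms(3) by (simp add: is_path_def)
    with True path fair show ?thesis
      by (intro exI[of _ s] exI[of _ a] exI[of _ len]) (simp add: zero_enat_def[symmetric])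
  next
    case False
    then have "conf 0 = (S, 0, \<rho>)"
      using conf_0 by (simp add: c0_def)
    from path_prefix[OF this False assms(3)] path fair show ?thesis
      by (intro exI[of _ s] exI[of _ a] exI[of _ len]) simp
  qed
qed

lemma transition_on_path:
  assumes "finite {M. reach S M}" and "finite (dom S)" and "reach S A" and "step A l B"
  shows "\<exists>s a len i. is_path S s a len \<and> enat i < len \<and> path_trans s a i = (A, l, B)"
proof -
  obtain \<rho> where \<rho>: "exec S \<rho> A"
    using reach_exec[OF assms(3)] by blast
  moreover have "exec A [(l, B)] B"
    using assms(4) by simp
  ultimately have "exec S (\<rho> @ [(l, B)]) B"
    unfolding exec_append by blast
  from fair_path_extending[OF assms(1,2) this] obtain s a len where path: "is_path S s a len"
    and len: "enat (length (\<rho> @ [(l, B)])) \<le> len"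
    and prefix: "\<forall>k < length (\<rho> @ [(l, B)]). path_trans s a k = exec_trans S (\<rho> @ [(l, B)]) k"
    by blast
  have "path_trans s a (length \<rho>) = (A, l, B)"
    using prefix exec_trans_snoc[OF \<rho>] by simp
  moreover have "enat (length \<rho>) < len"
    using len by (simp add: Suc_ile_eq)
  ultimately show ?thesis
    using path by blast
qed

lemma reach_uninvolved:
  assumes "\<And>A l B. reach M A \<Longrightarrow> step A l B \<Longrightarrow> \<not> involves (A, l, B) p" and "reach M X"
  shows "X p = M p"
  using assms(2)
proof (induction rule: rtranclp_induct)
  case (step X Y)
  from step.hyps(2) obtain l where l: "step X l Y"
    by blast
  have "\<not> involves (X, l, Y) p"
    by (rule assms(1)[OF step.hyps(1) l])
  then have "Y p = X p"
    by (rule step_uninvolved[OF l])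
  then show ?case
    using step.IH by simp
qed simp

section \<open>From L(ST) to lock-freedom\<close>

lemma L_ST_no_stuck_location:
  assumes L_ST: "satisfies_L_ST N" and path: "is_path N s a len" and fair: "ST_fair s a len"
    and "p \<in> dom N" and "enat n \<le> len" and not_End: "s n p \<noteq> Some End"
    and uninvolved: "\<And>A l B. reach (s n) A \<Longrightarrow> step A l B \<Longrightarrow> \<not> involves (A, l, B) p"
  shows False
proof -
  have after: "reach (s n) (s i)" if "n \<le> i" and "enat i \<le> len" for i
    using path_reach_between[OF path that] .
  have "s i p \<noteq> Some End" if "enat i \<le> len" for i
  proof (cases "i \<le> n")
    case True
    then have "reach (s i) (s n)"
      using path_reach_between[OF path _ \<open>enat n \<le> len\<close>] by blast
    then show ?thesis
      using reach_End[of "s i" "s n" p] not_End by auto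
  next
    case False
    then have "reach (s n) (s i)"
      using after[of i] that by simp
    then have "s i p = s n p"
      using reach_uninvolved[of "s n" p, OF uninvolved] by blast
    then show ?thesis
      using not_End by simp
  qed
  moreover have "{i. enat i < len \<and> involves (path_trans s a i) p} \<subseteq> {..<n}"
  proof (rule subsetI, rule ccontr)
    fix i
    assume i: "i \<in> {i. enat i < len \<and> involves (path_trans s a i) p}" and "i \<notin> {..<n}"
    then have "reach (s n) (s i)"
      using after[of i] by (simp add: order_less_imp_le)
    moreover have "step (s i) (a i) (s (Suc i))"
      using path i by (simp add: is_path_def)
    ultimately show False
      using uninvolved i by (simp add: path_trans_def)
  qed
  then have "finite {i. enat i < len \<and> involves (path_trans s a i) p}"
    using finite_subset by blast
  moreover have "(\<exists>i. enat i \<le> len \<and> s i p = Some End) \<or>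
      infinite {i. enat i < len \<and> involves (path_trans s a i) p}"
    using L_ST path fair \<open>p \<in> dom N\<close> unfolding satisfies_L_ST_def by blast
  ultimately show False
    by blast
qed

lemma L_ST_imp_lock_free:
  assumes fin: "finite {M. reach N M}" "finite (dom N)" and L_ST: "satisfies_L_ST N"
  shows "padovani_lock_free N"
  unfolding padovani_lock_free_def
proof (intro allI impI ballI)
  fix M p
  assume "reach N M" and "p \<in> dom M" and not_End: "M p \<noteq> Some End"
  show "\<exists>s a len. is_path M s a len \<and> (\<exists>i. enat i < len \<and> involves (path_trans s a i) p)"
  proof (rule ccontr)
    assume no_path: "\<not> ?thesis"
    have "{A. reach M A} \<subseteq> {A. reach N A}"
      using rtranclp_trans[OF \<open>reach N M\<close>] by blast
    then have "finite {A. reach M A}"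
      using fin(1) by (rule finite_subset)
    moreover have "finite (dom M)"
      using fin(2) reach_dom[OF \<open>reach N M\<close>] by simp
    ultimately have uninvolved: "\<not> involves (A, l, B) p" if A: "reach M A" "step A l B" for A l B
    proof -
      obtain s a len i where "is_path M s a len" "enat i < len" "path_trans s a i = (A, l, B)"
        using transition_on_path[OF \<open>finite {A. reach M A}\<close> \<open>finite (dom M)\<close> A] by blast
      with no_path show ?thesis
        by metis
    qed
    obtain \<rho> where "exec N \<rho> M"
      using reach_exec[OF \<open>reach N M\<close>] by blast
    from fair_path_extending[OF fin this] obtain s a len where path: "is_path N s a len"
      and fair: "ST_fair s a len" and len: "enat (length \<rho>) \<le> len" and "s (length \<rho>) = M"
      by blast
    have "p \<in> dom N"
      using \<open>p \<in> dom M\<close> reach_dom[OF \<open>reach N M\<close>] by simp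
    show False
    proof (rule L_ST_no_stuck_location[OF L_ST path fair \<open>p \<in> dom N\<close> len])
      show "s (length \<rho>) p \<noteq> Some End"
        using not_End \<open>s (length \<rho>) = M\<close> by simp
      show "\<not> involves (A, l, B) p" if "reach (s (length \<rho>)) A" and "step A l B" for A l B
        using uninvolved that \<open>s (length \<rho>) = M\<close> by blast
    qed
  qed
qed

section \<open>From lock-freedom to L(ST)\<close>

text \<open>Each transition of the execution is relentlessly enabled, because its source recurs by the
  previous step.\<close>

lemma fair_path_repeats_execution:
  assumes fair: "ST_fair s a \<infinity>" and recurrent: "\<forall>k. \<exists>i\<ge>k. s i = s' 0"
    and steps: "\<And>m. m < n \<Longrightarrow> step (s' m) (a' m) (s' (Suc m))" and "m < n"
  shows "\<forall>k. \<exists>i\<ge>k. path_trans s a i = path_trans s' a' m"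
proof -
  have occurs: "\<forall>k. \<exists>i\<ge>k. path_trans s a i = path_trans s' a' m"
    if source: "\<forall>k. \<exists>i\<ge>k. s i = s' m" and "m < n" for m
  proof
    fix k
    have "relentless s \<infinity> k (path_trans s' a' m)"
      using source by (simp add: relentless_def path_trans_def)
    moreover have "step (s' m) (a' m) (s' (Suc m))"
      using steps \<open>m < n\<close> by blast
    ultimately have "occurs_from s a \<infinity> k (path_trans s' a' m)"
      using fair unfolding ST_fair_def by (simp add: path_trans_def)
    then show "\<exists>i\<ge>k. path_trans s a i = path_trans s' a' m"
      by (auto simp: occurs_from_def)
  qed
  have "\<forall>k. \<exists>i\<ge>k. s i = s' m" if "m \<le> n" for m
    using that
  proof (induction m)
    case (Suc m)
    show ?case
    proof
      fix k
      obtain i where "i \<ge> k" "path_trans s a i = path_trans s' a' m"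
        using occurs[of m] Suc by (meson Suc_le_lessD less_imp_le_nat)
      then show "\<exists>i\<ge>k. s i = s' (Suc m)"
        by (intro exI[of _ "Suc i"]) (simp add: path_trans_def)
    qed
  qed (use recurrent in simp)
  then show ?thesis
    using occurs assms(4) by simp
qed

lemma lock_free_moves:
  assumes "padovani_lock_free N" and "reach N M" and "p \<in> dom N" and "M p \<noteq> Some End"
  shows "\<exists>s a len i. is_path M s a len \<and> enat i < len \<and> involves (path_trans s a i) p"
proof -
  have "p \<in> dom M"
    using assms(3) reach_dom[OF assms(2)] by simp
  then show ?thesis
    using assms(1,2,4) unfolding padovani_lock_free_def by blast
qed

lemma lock_free_finite_path_End:
  assumes "padovani_lock_free N" and path: "is_path N s a (enat m)" and "p \<in> dom N"
  shows "s m p = Some End"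
proof (rule ccontr)
  assume "s m p \<noteq> Some End"
  then obtain s' a' len' i where path': "is_path (s m) s' a' len'" and "enat i < len'"
    using lock_free_moves[OF assms(1) path_reach[OF path] assms(3)] by blast
  moreover have "enat 0 < len'"
    using le_less_trans[OF _ \<open>enat i < len'\<close>] by simp
  ultimately have "step (s' 0) (a' 0) (s' (Suc 0))" and "s' 0 = s m"
    unfolding is_path_def by blast+
  moreover have "\<not> step (s m) l M" for l M
    using path by (simp add: is_path_def)
  ultimately show False
    by simp
qed

lemma lock_free_infinite_path_involves:
  assumes fin: "finite {M. reach N M}" and "padovani_lock_free N"
    and path: "is_path N s a \<infinity>" and fair: "ST_fair s a \<infinity>"
    and "p \<in> dom N" and not_End: "\<forall>i. s i p \<noteq> Some End"
  shows "infinite {i. involves (path_trans s a i) p}"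
proof
  assume "finite {i. involves (path_trans s a i) p}"
  then obtain K where K: "\<forall>i \<in> {i. involves (path_trans s a i) p}. i < K"
    unfolding finite_nat_set_iff_bounded by blast
  have "s ` {K..} \<subseteq> {M. reach N M}"
    using path_reach[OF path] by auto
  then have "finite (s ` {K..})"
    using fin finite_subset by blast
  then obtain S where "S \<in> s ` {K..}" and "infinite (s -` {S})"
    using inf_img_fin_dom[OF _ infinite_Ici] by blast
  then have recurrent: "\<forall>k. \<exists>i\<ge>k. s i = S" and "reach N S"
    using path_reach[OF path] by (auto simp: infinite_nat_iff_unbounded_le)
  then obtain s' a' len' i0 where path': "is_path S s' a' len'" and "enat i0 < len'"
    and involves: "involves (path_trans s' a' i0) p"
    using lock_free_moves[OF assms(2) _ assms(5)] not_End by blast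
  have "\<forall>k. \<exists>i\<ge>k. path_trans s a i = path_trans s' a' i0"
  proof (rule fair_path_repeats_execution[OF fair _ _ lessI])
    show "\<forall>k. \<exists>i\<ge>k. s i = s' 0"
      using recurrent path' by (simp add: is_path_def)
    show "step (s' m) (a' m) (s' (Suc m))" if "m < Suc i0" for m
    proof -
      have "enat m < len'"
        using le_less_trans[OF _ \<open>enat i0 < len'\<close>, of "enat m"] that by simp
      then show ?thesis
        using path' by (simp add: is_path_def)
    qed
  qed
  then obtain i where "K \<le> i" and "path_trans s a i = path_trans s' a' i0"
    by blast
  with involves have "involves (path_trans s a i) p" and "K \<le> i"
    by simp_all
  with K show False
    by auto
qed

lemma lock_free_imp_L_ST:
  assumes "finite {M. reach N M}" and "padovani_lock_free N"
  shows "satisfies_L_ST N"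
  unfolding satisfies_L_ST_def
proof (intro allI impI ballI)
  fix s a len p
  assume path: "is_path N s a len" and fair: "ST_fair s a len" and "p \<in> dom N"
  show "(\<exists>i. enat i \<le> len \<and> s i p = Some End) \<or>
    infinite {i. enat i < len \<and> involves (path_trans s a i) p}"
  proof (cases len)
    case (enat m)
    then show ?thesis
      using lock_free_finite_path_End[OF assms(2) _ \<open>p \<in> dom N\<close>] path by auto
  next
    case infinity
    then show ?thesis
      using lock_free_infinite_path_involves[OF assms _ _ \<open>p \<in> dom N\<close>] path fair by auto
  qed
qed

theorem mainTheorem7:
  fixes N :: "('p, 'l, 'x) net"
  assumes "network N"
  shows "padovani_lock_free N \<longleftrightarrow> satisfies_L_ST N"
proof -
  have "finite {M. reach N M}"
    using assms by (rule finite_reachable)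
  moreover have "finite (dom N)"
    using assms by (simp add: network_def)
  ultimately show ?thesis
    using lock_free_imp_L_ST L_ST_imp_lock_free by blast
qed

end
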